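(* The Hilbert series of the coordinate ring of the cone of ${\mathrm{O}}(3)$ is \[\mathrm{H}(\mathcal{O}(\mathcal{C}({\mathrm{O}}(3)));t)=-t+\sum_{d=0}^\infty\binom{2d+3}{3}t^{d}=\frac{1+5t+5t^2-6t^3+4t^4-t^5}{(1-t)^4}.\]
   Context: ${\mathrm{O}}(3)=\{M\in\mathbb{C}^{3\times3}\mid M^TM=I\}$. The cone $\mathcal{C}({\mathrm{O}}(3))$ is the Zariski closure in $\mathbb{C}^{3\times 3}$ of $\{cM\mid c\in\mathbb{C},M\in{\mathrm{O}}(3)\}$; its coordinate ring is the quotient of the standard graded polynomial ring $\mathbb{C}[x_{ij}\mid 1\le i,j\le 3]$ by the homogeneous vanishing ideal of the cone, with the induced grading. The Hilbert series of a graded algebra $A=\bigoplus_dA_d$ is $\sum_d\dim_{\mathbb{C}}(A_d)t^d$. *)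

theory Defs
  imports "HOL-Analysis.Analysis" "HOL-Computational_Algebra.Formal_Power_Series" "HOL-Library.Function_Algebras"
begin

type_synonym mat3 = "complex^3^3"
type_synonym expo = "3 \<Rightarrow> 3 \<Rightarrow> nat"

definition O3 :: "mat3 set" where
  "O3 = {M. transpose M ** M = mat 1}"

text \<open>Monomials in the variables x_ij, and polynomials as finitely supported
 coefficient functions on exponent vectors.\<close>

definition monomial_eval :: "expo \<Rightarrow> mat3 \<Rightarrow> complex" where
  "monomial_eval a M = (\<Prod>i\<in>UNIV. \<Prod>j\<in>UNIV. (M$i$j) ^ (a i j))"

definition total_degree :: "expo \<Rightarrow> nat" where
  "total_degree a = (\<Sum>i\<in>UNIV. \<Sum>j\<in>UNIV. a i j)"

definition polys :: "(expo \<Rightarrow> complex) set" where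
  "polys = {p. finite {a. p a \<noteq> 0}}"

definition homog_polys :: "nat \<Rightarrow> (expo \<Rightarrow> complex) set" where
  "homog_polys d = {p \<in> polys. \<forall>a. p a \<noteq> 0 \<longrightarrow> total_degree a = d}"

definition poly_eval :: "(expo \<Rightarrow> complex) \<Rightarrow> mat3 \<Rightarrow> complex" where
  "poly_eval p M = (\<Sum>a\<in>{a. p a \<noteq> 0}. p a * monomial_eval a M)"

definition zariski_closure :: "mat3 set \<Rightarrow> mat3 set" where
  "zariski_closure S = {M. \<forall>p\<in>polys. (\<forall>x\<in>S. poly_eval p x = 0) \<longrightarrow> poly_eval p M = 0}"

definition cone_O3 :: "mat3 set" where
  "cone_O3 = zariski_closure {(\<chi> i j. c * M$i$j) | c M. M \<in> O3}"

text \<open>Degree-d part of the coordinate ring C[x]/I(cone): homogeneous degree-d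
 polynomials modulo those vanishing on the cone, realised (isomorphically) as the
 space of their restrictions (as functions) to the cone.\<close>

definition coord_ring_part :: "nat \<Rightarrow> (mat3 \<Rightarrow> complex) set" where
  "coord_ring_part d = (\<lambda>p. \<lambda>M. if M \<in> cone_O3 then poly_eval p M else 0) ` homog_polys d"

definition hilbert_function :: "nat \<Rightarrow> nat" where
  "hilbert_function d = vector_space.dim (\<lambda>(c::complex) (f::mat3 \<Rightarrow> complex). \<lambda>x. c * f x)
                          (coord_ring_part d)"

definition hilbert_series :: "rat fps" where
  "hilbert_series = Abs_fps (\<lambda>d. of_nat (hilbert_function d))"

end

theory Submission
  imports Defs
begin

text \<open>
  The homogenised Euler--Rodrigues map \<open>rot\<close> has entries that are quadratic forms in the
  quaternion \<open>q\<close>, and every matrix of SO(3) is of the form \<open>rot q\<close>: the symmetric matrix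
  \<open>4 q q\<^sup>T\<close> is linear in the entries of the rotation and has rank one, so \<open>q\<close> can be read
  off from it. Since \<open>-1\<close> swaps the two components of O(3) and
  \<open>rot\<close> maps into the cone, a form of degree \<open>d\<close> vanishes on the cone if and only if its
  pullback along \<open>rot\<close> vanishes. Hence the degree-\<open>d\<close> part of the coordinate ring is
  isomorphic to the span of the pulled-back monomials of degree \<open>d\<close>, a space of quaternion
  forms of degree \<open>2 d\<close>.

  The entries of \<open>rot\<close> together with \<open>qnorm\<close> span all quadratic forms, while \<open>qnorm\<^sup>2\<close> (a
  column norm) and \<open>qnorm\<close> times an entry of \<open>rot\<close> (a cofactor) are pulled-back quadratics.
  So for \<open>d \<noteq> 1\<close> the pullbacks are all \<open>(2 d + 3) choose 3\<close> forms of degree \<open>2 d\<close>, whereas in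
  degree 1 only the 9 entries of \<open>rot\<close> remain, which accounts for the correction \<open>-t\<close>.
\<close>

section \<open>The Euler--Rodrigues parametrisation\<close>

type_synonym quat = "complex \<times> complex \<times> complex \<times> complex"

text \<open>
  The Euler--Rodrigues formula, made homogeneous: for a unit quaternion \<open>q\<close>, \<open>rot q\<close> is the
  rotation matrix of \<open>q\<close>, and \<open>rot (c * q) = c\<^sup>2 * rot q\<close>.
\<close>

definition rot :: "quat \<Rightarrow> mat3" where
  "rot = (\<lambda>(a, b, c, d). vector [
     vector [a\<^sup>2 + b\<^sup>2 - c\<^sup>2 - d\<^sup>2, 2 * (b * c - a * d), 2 * (b * d + a * c)],
     vector [2 * (b * c + a * d), a\<^sup>2 - b\<^sup>2 + c\<^sup>2 - d\<^sup>2, 2 * (c * d - a * b)],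
     vector [2 * (b * d - a * c), 2 * (c * d + a * b), a\<^sup>2 - b\<^sup>2 - c\<^sup>2 + d\<^sup>2]])"

definition qnorm :: "quat \<Rightarrow> complex" where
  "qnorm = (\<lambda>(a, b, c, d). a\<^sup>2 + b\<^sup>2 + c\<^sup>2 + d\<^sup>2)"

definition qcoord :: "quat \<Rightarrow> nat \<Rightarrow> complex" where
  "qcoord = (\<lambda>(a, b, c, d). nth [a, b, c, d])"

lemma rot_orthogonal: "transpose (rot q) ** rot q = mat (qnorm q ^ 2)"
proof -
  obtain a b c d where q: "q = (a, b, c, d)" by (cases q)
  show ?thesis
    unfolding q by (simp add: rot_def qnorm_def vec_eq_iff forall_3 sum_3 matrix_matrix_mult_def
        transpose_def mat_def; intro conjI; algebra)
qed

text \<open>Indices of type \<open>3\<close> are added modulo 3, but \<open>simp\<close> leaves the numerals 4 and 5 unreduced.\<close>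

lemma mod_3_numerals: "(4::3) = 1" "(5::3) = 2"
  by simp_all

lemma qnorm_mult_rot:
  "qnorm q * rot q $ i $ j =
     rot q $ (i + 1) $ (j + 1) * rot q $ (i + 2) $ (j + 2) - rot q $ (i + 1) $ (j + 2) * rot q $ (i + 2) $ (j + 1)"
proof -
  obtain a b c d where q: "q = (a, b, c, d)" by (cases q)
  have "\<forall>i j. qnorm q * rot q $ i $ j =
     rot q $ (i + 1) $ (j + 1) * rot q $ (i + 2) $ (j + 2) - rot q $ (i + 1) $ (j + 2) * rot q $ (i + 2) $ (j + 1)"
    unfolding forall_3 by (simp add: q rot_def qnorm_def mod_3_numerals; intro conjI; algebra)
  then show ?thesis by blast
qed

text \<open>
  \<open>qgram (qnorm q) (rot q)\<close> is the matrix \<open>4 q q\<^sup>T\<close> (lemma \<open>qgram_rot\<close>), written linearly in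
  \<open>qnorm q\<close> and the entries of \<open>rot q\<close>; this is the classical recipe for recovering a
  quaternion from its rotation matrix.
\<close>

definition qgram :: "complex \<Rightarrow> mat3 \<Rightarrow> nat \<Rightarrow> nat \<Rightarrow> complex" where
  "qgram s M x y =
    [[s + M$1$1 + M$2$2 + M$3$3, M$3$2 - M$2$3, M$1$3 - M$3$1, M$2$1 - M$1$2],
     [M$3$2 - M$2$3, s + M$1$1 - M$2$2 - M$3$3, M$1$2 + M$2$1, M$1$3 + M$3$1],
     [M$1$3 - M$3$1, M$1$2 + M$2$1, s - M$1$1 + M$2$2 - M$3$3, M$2$3 + M$3$2],
     [M$2$1 - M$1$2, M$1$3 + M$3$1, M$2$3 + M$3$2, s - M$1$1 - M$2$2 + M$3$3]] ! x ! y"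

lemma all_less_4: "(\<forall>x<4. P x) \<longleftrightarrow> P 0 \<and> P 1 \<and> P 2 \<and> P (3::nat)"
  by (auto simp: less_Suc_eq numeral_eq_Suc)

lemma qgram_rot: "\<forall>x<4. \<forall>y<4. qgram (qnorm q) (rot q) x y = 4 * qcoord q x * qcoord q y"
proof -
  obtain a b c d where q: "q = (a, b, c, d)" by (cases q)
  show ?thesis
    unfolding all_less_4 by (simp add: q qgram_def rot_def qnorm_def qcoord_def numeral_eq_Suc; intro conjI; algebra)
qed

lemma qgram_trace: "qgram s M 0 0 + qgram s M 1 1 + qgram s M 2 2 + qgram s M 3 3 = 4 * s"
  by (simp add: qgram_def numeral_eq_Suc)

lemma qgram_inj:
  assumes "\<forall>x<4. \<forall>y<4. qgram s M x y = qgram s M' x y"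
  shows "M = M'"
  using assms unfolding all_less_4 by (simp add: qgram_def numeral_eq_Suc vec_eq_iff forall_3; algebra)

lemma so3_cofactor:
  fixes M :: mat3
  assumes "transpose M ** M = mat 1" "det M = 1"
  shows "M $ i $ j = M $ (i + 1) $ (j + 1) * M $ (i + 2) $ (j + 2) - M $ (i + 1) $ (j + 2) * M $ (i + 2) $ (j + 1)"
proof -
  define C :: mat3 where
    "C = (\<chi> i j. M $ (i + 1) $ (j + 1) * M $ (i + 2) $ (j + 2) - M $ (i + 1) $ (j + 2) * M $ (i + 2) $ (j + 1))"
  have "transpose C ** M = mat (det M)"
    unfolding C_def det_3
    by (simp add: vec_eq_iff forall_3 sum_3 matrix_matrix_mult_def transpose_def mat_def mod_3_numerals; intro conjI; algebra)
  then have CM: "transpose C ** M = mat 1" using assms(2) by simp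
  have "transpose C = transpose C ** (M ** transpose M)"
    using assms(1) matrix_left_right_inverse by (metis matrix_mul_rid)
  also have "\<dots> = transpose M"
    by (simp add: matrix_mul_assoc CM)
  finally have "M = C" by (metis transpose_transpose)
  then have "M $ i $ j = C $ i $ j" by (simp only:)
  then show ?thesis unfolding C_def by simp
qed

text \<open>
  Each \<open>2 \<times> 2\<close> minor of \<open>qgram 1 M\<close> lies in the ideal generated by the orthonormality relations
  and the cofactor identities of \<open>so3_cofactor\<close>, all of which are quadratic.
\<close>

lemma so3_qgram_rank_one:
  fixes M :: mat3
  assumes "transpose M ** M = mat 1" "det M = 1"
  shows "\<forall>x<4. \<forall>y<4. \<forall>z<4. qgram 1 M x y * qgram 1 M x z = qgram 1 M x x * qgram 1 M y z"
proof -
  have "M ** transpose M = mat 1" using assms(1) matrix_left_right_inverse by blast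
  then have "\<forall>i j. (\<Sum>k\<in>UNIV. M $ i $ k * M $ j $ k) = (if i = j then 1 else 0)"
    by (simp add: vec_eq_iff matrix_matrix_mult_def transpose_def mat_def)
  note rows = this[unfolded forall_3 sum_3, simplified]
  have "\<forall>i j. M $ i $ j = M $ (i + 1) $ (j + 1) * M $ (i + 2) $ (j + 2) - M $ (i + 1) $ (j + 2) * M $ (i + 2) $ (j + 1)"
    using so3_cofactor[OF assms] by blast
  note cofactors = this[unfolded forall_3, simplified, unfolded mod_3_numerals]
  show ?thesis
    using rows cofactors unfolding all_less_4
    by (simp (no_asm) add: qgram_def numeral_eq_Suc; elim conjE; intro conjI; algebra)
qed

lemma rank_one_factor:
  fixes Q :: "'a \<Rightarrow> 'a \<Rightarrow> complex"
  assumes "Q x x \<noteq> 0" and "\<And>y z. y \<in> I \<Longrightarrow> z \<in> I \<Longrightarrow> Q x y * Q x z = Q x x * Q y z"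
  shows "\<exists>v. \<forall>y\<in>I. \<forall>z\<in>I. Q y z = v y * v z"
proof -
  define r where "r = csqrt (Q x x)"
  have r: "r * r = Q x x" "r \<noteq> 0"
    using assms(1) by (simp_all add: r_def power2_eq_square[symmetric])
  have "Q y z = Q x y / r * (Q x z / r)" if "y \<in> I" "z \<in> I" for y z
  proof -
    have "Q x y / r * (Q x z / r) = Q x x * Q y z / (r * r)"
      using assms(2)[OF that] by simp
    also have "\<dots> = Q y z" using r assms(1) by simp
    finally show ?thesis ..
  qed
  then show ?thesis by (intro exI[of _ "\<lambda>y. Q x y / r"]) blast
qed

lemma so3_in_range_rot:
  fixes M :: mat3
  assumes "transpose M ** M = mat 1" "det M = 1"
  shows "\<exists>q. rot q = M"
proof -
  let ?Q = "qgram 1 M"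
  have "\<not> (\<forall>x<4. ?Q x x = 0)"
    using qgram_trace[of 1 M] unfolding all_less_4 by auto
  then obtain x where x: "x < 4" "?Q x x \<noteq> 0" by blast
  have "\<exists>w. \<forall>y\<in>{..<4}. \<forall>z\<in>{..<4}. ?Q y z = w y * w z"
    using x so3_qgram_rank_one[OF assms] by (intro rank_one_factor[of ?Q x]) auto
  then obtain w where w: "\<forall>y<4. \<forall>z<4. ?Q y z = w y * w z" by auto
  define q where "q = (w 0 / 2, w 1 / 2, w 2 / 2, w 3 / 2)"
  have coord: "\<forall>y<4. qcoord q y = w y / 2"
    unfolding all_less_4 by (simp add: q_def qcoord_def)
  have gram: "\<forall>y<4. \<forall>z<4. qgram (qnorm q) (rot q) y z = ?Q y z"
    using qgram_rot[of q] w coord by auto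
  then have "4 * qnorm q = 4 * 1"
    using qgram_trace[of "qnorm q" "rot q"] qgram_trace[of 1 M] unfolding all_less_4 by simp
  with gram have "rot q = M"
    by (intro qgram_inj) simp
  then show ?thesis by blast
qed

section \<open>The cone over O(3)\<close>

definition scaled_O3 :: "mat3 set" where
  "scaled_O3 = {(\<chi> i j. c * M $ i $ j) | c M. M \<in> O3}"

lemma cone_O3_eq: "cone_O3 = zariski_closure scaled_O3"
  unfolding cone_O3_def scaled_O3_def ..

lemma continuous_on_poly_eval: "continuous_on UNIV (poly_eval p)"
  unfolding poly_eval_def monomial_eval_def by (intro continuous_intros)

lemma closure_subset_zariski_closure: "closure S \<subseteq> zariski_closure S"
proof
  fix M assume M: "M \<in> closure S"
  show "M \<in> zariski_closure S"
    unfolding zariski_closure_def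
  proof (intro CollectI ballI impI)
    fix p assume "\<forall>x\<in>S. poly_eval p x = 0"
    then have "S \<subseteq> {x. poly_eval p x = 0}" by blast
    moreover have "closed {x. poly_eval p x = 0}"
      by (intro closed_Collect_eq continuous_on_poly_eval continuous_on_const)
    ultimately show "poly_eval p M = 0"
      using M closure_minimal by blast
  qed
qed

lemma rot_in_scaled_O3:
  assumes "qnorm q \<noteq> 0"
  shows "rot q \<in> scaled_O3"
proof -
  define M :: mat3 where "M = (\<chi> i j. rot q $ i $ j / qnorm q)"
  have "(transpose M ** M) $ i $ j = mat 1 $ i $ j" for i j
  proof -
    have "(transpose M ** M) $ i $ j = (transpose (rot q) ** rot q) $ i $ j / qnorm q ^ 2"
      by (simp add: M_def matrix_matrix_mult_def transpose_def sum_divide_distrib power2_eq_square)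
    then show ?thesis
      using assms by (simp add: rot_orthogonal mat_def)
  qed
  then have "M \<in> O3" by (simp add: O3_def vec_eq_iff)
  moreover have "rot q = (\<chi> i j. qnorm q * M $ i $ j)"
    using assms by (simp add: M_def vec_eq_iff)
  ultimately show ?thesis unfolding scaled_O3_def by blast
qed

lemma rot_in_cone_O3: "rot q \<in> cone_O3"
proof -
  have "rot q \<in> closure scaled_O3"
  proof (cases "qnorm q = 0")
    case False
    then show ?thesis using rot_in_scaled_O3 closure_subset by blast
  next
    case True
    obtain a b c d where q: "q = (a, b, c, d)" by (cases q)
    define f where "f t = rot (a + t, b, c, d)" for t
    have "isCont (\<lambda>t. f t $ i $ j) 0" for i j
      using exhaust_3[of i] exhaust_3[of j]
      by (elim disjE) (auto simp: f_def rot_def intro!: continuous_intros)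
    then have "(f \<longlongrightarrow> f 0) (at 0)"
      by (intro vec_tendstoI) (simp add: isCont_def)
    moreover have "\<forall>\<^sub>F t in at 0. f t \<in> scaled_O3"
      using eventually_neq_at_within[of 0 0 UNIV] eventually_neq_at_within[of "- 2 * a" 0 UNIV]
    proof eventually_elim
      case (elim t)
      have "qnorm (a + t, b, c, d) = qnorm q + t * (2 * a + t)"
        by (simp add: q qnorm_def power2_eq_square algebra_simps)
      also have "\<dots> \<noteq> 0"
        using True elim by (auto simp: add_eq_0_iff)
      finally show ?case unfolding f_def by (rule rot_in_scaled_O3)
    qed
    ultimately show ?thesis
      unfolding f_def q
      by (intro Lim_in_closed_set[OF closed_closure] eventually_mono[OF _ closure_subset[THEN subsetD]]) auto
  qed
  then show ?thesis
    unfolding cone_O3_eq using closure_subset_zariski_closure by blast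
qed

lemma poly_eval_scale:
  assumes "p \<in> homog_polys d"
  shows "poly_eval p (\<chi> i j. c * M $ i $ j) = c ^ d * poly_eval p M"
proof -
  have "monomial_eval a (\<chi> i j. c * M $ i $ j) = c ^ total_degree a * monomial_eval a M" for a
    unfolding monomial_eval_def total_degree_def power_sum
    by (simp add: power_mult_distrib prod.distrib)
  then show ?thesis
    using assms unfolding poly_eval_def sum_distrib_left
    by (intro sum.cong) (auto simp: homog_polys_def)
qed

lemma O3_det_cases:
  assumes "M \<in> O3"
  shows "det M = 1 \<or> det M = -1"
proof -
  have "det (transpose M ** M) = 1" using assms by (simp add: O3_def)
  then have "det M * det M = 1" by (simp add: det_mul det_transpose)
  then show ?thesis by (simp add: square_eq_1_iff)
qed

lemma poly_eval_vanishes_on_cone: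
  assumes p: "p \<in> homog_polys d" and rot: "\<And>q. poly_eval p (rot q) = 0" and M: "M \<in> cone_O3"
  shows "poly_eval p M = 0"
proof -
  have so3: "poly_eval p N = 0" if "N \<in> O3" "det N = 1" for N
    using so3_in_range_rot[of N] that rot by (auto simp: O3_def)
  have o3: "poly_eval p N = 0" if N: "N \<in> O3" for N
  proof (cases "det N = 1")
    case True
    then show ?thesis using so3 N by blast
  next
    case False
    let ?N' = "\<chi> i j. (-1) * N $ i $ j"
    have "det ?N' = - det N" unfolding det_3 by (simp add: algebra_simps)
    then have "det ?N' = 1" using False O3_det_cases[OF N] by simp
    moreover have "?N' \<in> O3" using N by (simp add: O3_def vec_eq_iff matrix_matrix_mult_def transpose_def)
    ultimately have "poly_eval p ?N' = 0" using so3 by blast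
    then show ?thesis unfolding poly_eval_scale[OF p] by simp
  qed
  have "poly_eval p N = 0" if "N \<in> scaled_O3" for N
    using that o3 by (auto simp: scaled_O3_def poly_eval_scale[OF p])
  then show ?thesis
    using M p by (auto simp: cone_O3_eq zariski_closure_def homog_polys_def)
qed

section \<open>Pulling the coordinate ring back along \<open>rot\<close>\<close>

text \<open>
  The library's \<open>dim_image_eq\<close> assumes a finite-dimensional domain, which the proof does not use.
\<close>

lemma (in vector_space_pair) dim_image_eq_of_inj_on:
  assumes f: "Vector_Spaces.linear s1 s2 f" and inj: "inj_on f (vs1.span S)"
  shows "vs2.dim (f ` S) = vs1.dim S"
proof -
  obtain B where B: "B \<subseteq> S" "vs1.independent B" "S \<subseteq> vs1.span B" "card B = vs1.dim S"
    by (rule vs1.basis_exists)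
  have "vs1.span B \<subseteq> vs1.span S" using B(1) by (rule vs1.span_mono)
  with inj have inj_B: "inj_on f (vs1.span B)" by (rule inj_on_subset)
  show ?thesis
  proof (rule vs2.dim_unique)
    show "f ` B \<subseteq> f ` S" using B(1) by blast
    show "f ` S \<subseteq> vs2.span (f ` B)" using B(3) linear_span_image[OF f, of B] by blast
    show "vs2.independent (f ` B)" using linear_independent_injective_image[OF f B(2) inj_B] .
    show "card (f ` B) = vs1.dim S"
      using card_image[OF inj_on_subset[OF inj_B vs1.span_superset]] B(4) by simp
  qed
qed

interpretation fun_vs: vector_space "\<lambda>(c::complex) (f::'a \<Rightarrow> complex) x. c * f x"
  by unfold_locales (simp_all add: fun_eq_iff algebra_simps)

interpretation fun_vs_pair: vector_space_pair
  "\<lambda>(c::complex) (f::'a \<Rightarrow> complex) x. c * f x" "\<lambda>(c::complex) (f::'b \<Rightarrow> complex) x. c * f x" ..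

lemma linear_comp_right:
  "Vector_Spaces.linear (\<lambda>(c::complex) (f::'a \<Rightarrow> complex) x. c * f x) (\<lambda>(c::complex) (f::'b \<Rightarrow> complex) x. c * f x)
     (\<lambda>F. F \<circ> g)"
  by (simp add: Vector_Spaces.linear_iff fun_vs.vector_space_axioms comp_def plus_fun_def)

lemma span_add_fun: "f \<in> fun_vs.span S \<Longrightarrow> g \<in> fun_vs.span S \<Longrightarrow> (\<lambda>x. f x + g x) \<in> fun_vs.span S"
  using fun_vs.span_add[of f S g] by (simp add: plus_fun_def)

lemma span_diff_fun: "f \<in> fun_vs.span S \<Longrightarrow> g \<in> fun_vs.span S \<Longrightarrow> (\<lambda>x. f x - g x) \<in> fun_vs.span S"
  using fun_vs.span_diff[of f S g] by (simp add: fun_diff_def)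

lemma span_mult:
  assumes gen: "\<And>a b. a \<in> A \<Longrightarrow> b \<in> B \<Longrightarrow> a * b \<in> fun_vs.span C"
    and f: "f \<in> fun_vs.span A" and g: "g \<in> fun_vs.span B"
  shows "f * g \<in> fun_vs.span C"
proof -
  have left: "a * g \<in> fun_vs.span C" if a: "a \<in> A" for a
    using g
  proof (induction rule: fun_vs.span_induct_alt)
    case base
    then show ?case using fun_vs.span_zero by (simp add: zero_fun_def)
  next
    case (step c b h)
    have "a * ((\<lambda>x. c * b x) + h) = (\<lambda>x. c * (a * b) x) + a * h"
      by (simp add: fun_eq_iff algebra_simps)
    then show ?case
      by (metis fun_vs.span_add fun_vs.span_scale gen[OF a step(1)] step(2))
  qed
  show ?thesis
    using f
  proof (induction rule: fun_vs.span_induct_alt)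
    case base
    then show ?case using fun_vs.span_zero by (simp add: zero_fun_def)
  next
    case (step c a h)
    have "((\<lambda>x. c * a x) + h) * g = (\<lambda>x. c * (a * g) x) + h * g"
      by (simp add: fun_eq_iff algebra_simps)
    then show ?case
      by (metis fun_vs.span_add fun_vs.span_scale left step)
  qed
qed

lemma poly_eval_add:
  assumes "p \<in> polys" "p' \<in> polys"
  shows "poly_eval (p + p') M = poly_eval p M + poly_eval p' M"
proof -
  let ?A = "{a. p a \<noteq> 0} \<union> {a. p' a \<noteq> 0}"
  have fin: "finite ?A" using assms by (simp add: polys_def)
  have supp: "poly_eval r M = (\<Sum>a\<in>?A. r a * monomial_eval a M)" if "{a. r a \<noteq> 0} \<subseteq> ?A" for r
    unfolding poly_eval_def using fin that by (intro sum.mono_neutral_left) auto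
  have "{a. (p + p') a \<noteq> 0} \<subseteq> ?A" by auto
  then have "poly_eval (p + p') M = (\<Sum>a\<in>?A. (p a + p' a) * monomial_eval a M)"
    by (simp add: supp)
  also have "\<dots> = poly_eval p M + poly_eval p' M"
    by (simp add: supp distrib_right sum.distrib)
  finally show ?thesis .
qed

lemma poly_eval_smult: "poly_eval (\<lambda>a. c * p a) M = c * poly_eval p M"
  by (cases "c = 0") (simp_all add: poly_eval_def sum_distrib_left mult.assoc)

lemma homog_polys_add:
  assumes "p \<in> homog_polys d" "p' \<in> homog_polys d"
  shows "p + p' \<in> homog_polys d"
proof -
  have "{a. (p + p') a \<noteq> 0} \<subseteq> {a. p a \<noteq> 0} \<union> {a. p' a \<noteq> 0}" by auto
  with assms show ?thesis
    unfolding homog_polys_def polys_def by (auto intro: finite_subset)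
qed

lemma homog_polys_smult: "p \<in> homog_polys d \<Longrightarrow> (\<lambda>a. c * p a) \<in> homog_polys d"
  unfolding homog_polys_def polys_def by (auto elim!: finite_subset[rotated])

definition cone_restriction :: "(expo \<Rightarrow> complex) \<Rightarrow> mat3 \<Rightarrow> complex" where
  "cone_restriction p M = (if M \<in> cone_O3 then poly_eval p M else 0)"

lemma coord_ring_part_eq: "coord_ring_part d = cone_restriction ` homog_polys d"
  by (simp add: coord_ring_part_def cone_restriction_def[abs_def])

lemma subspace_coord_ring_part: "fun_vs.subspace (coord_ring_part d)"
  unfolding coord_ring_part_eq
proof (rule fun_vs.subspaceI)
  have "cone_restriction 0 = 0" by (simp add: cone_restriction_def poly_eval_def fun_eq_iff)
  then show "0 \<in> cone_restriction ` homog_polys d" by (force simp: homog_polys_def polys_def)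
next
  fix F G assume "F \<in> cone_restriction ` homog_polys d" "G \<in> cone_restriction ` homog_polys d"
  then obtain p p' where "p \<in> homog_polys d" "p' \<in> homog_polys d" "F = cone_restriction p" "G = cone_restriction p'"
    by blast
  then show "F + G \<in> cone_restriction ` homog_polys d"
    by (intro image_eqI[of _ _ "p + p'"] homog_polys_add)
      (auto simp: cone_restriction_def poly_eval_add homog_polys_def fun_eq_iff)
next
  fix c F assume "F \<in> cone_restriction ` homog_polys d"
  then obtain p where "p \<in> homog_polys d" "F = cone_restriction p" by blast
  then show "(\<lambda>x. c * F x) \<in> cone_restriction ` homog_polys d"
    by (intro image_eqI[of _ _ "\<lambda>a. c * p a"] homog_polys_smult)
      (auto simp: cone_restriction_def poly_eval_smult fun_eq_iff)
qed

lemma sum_fun_apply: "(\<Sum>a\<in>A. f a) x = (\<Sum>a\<in>A. f a x)"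
  by (induction A rule: infinite_finite_induct) auto

lemma cone_restriction_rot: "cone_restriction p (rot q) = poly_eval p (rot q)"
  by (simp add: cone_restriction_def rot_in_cone_O3)

lemma inj_on_pullback_coord_ring_part: "inj_on (\<lambda>F. F \<circ> rot) (coord_ring_part d)"
proof (rule inj_onI)
  fix F G assume F: "F \<in> coord_ring_part d" and G: "G \<in> coord_ring_part d" and eq: "F \<circ> rot = G \<circ> rot"
  have "F - G \<in> coord_ring_part d"
    using fun_vs.subspace_diff[OF subspace_coord_ring_part F G] by (simp add: fun_diff_def)
  then obtain r where r: "r \<in> homog_polys d" "F - G = cone_restriction r"
    unfolding coord_ring_part_eq by blast
  have "poly_eval r (rot q) = 0" for q
    using fun_cong[OF eq, of q] fun_cong[OF r(2), of "rot q"] by (simp add: cone_restriction_rot)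
  then have "cone_restriction r = 0"
    using poly_eval_vanishes_on_cone[OF r(1)] by (auto simp: cone_restriction_def fun_eq_iff)
  then show "F = G" using r(2) by simp
qed

definition rot_monomials :: "nat \<Rightarrow> (quat \<Rightarrow> complex) set" where
  "rot_monomials d = (\<lambda>a q. monomial_eval a (rot q)) ` {a. total_degree a = d}"

lemma span_pullback_coord_ring_part:
  "fun_vs.span ((\<lambda>F. F \<circ> rot) ` coord_ring_part d) = fun_vs.span (rot_monomials d)"
  unfolding fun_vs.span_eq
proof
  show "(\<lambda>F. F \<circ> rot) ` coord_ring_part d \<subseteq> fun_vs.span (rot_monomials d)"
  proof (clarsimp simp: coord_ring_part_eq)
    fix p assume p: "p \<in> homog_polys d"
    have "cone_restriction p \<circ> rot = (\<Sum>a | p a \<noteq> 0. (\<lambda>x. p a * monomial_eval a (rot x)))"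
      by (simp add: fun_eq_iff cone_restriction_rot poly_eval_def sum_fun_apply)
    also have "\<dots> \<in> fun_vs.span (rot_monomials d)"
      using p by (intro fun_vs.span_sum fun_vs.span_scale fun_vs.span_base)
        (auto simp: rot_monomials_def homog_polys_def)
    finally show "cone_restriction p \<circ> rot \<in> fun_vs.span (rot_monomials d)" .
  qed
next
  show "rot_monomials d \<subseteq> fun_vs.span ((\<lambda>F. F \<circ> rot) ` coord_ring_part d)"
  proof
    fix f assume "f \<in> rot_monomials d"
    then obtain a where a: "total_degree a = d" and f: "f = (\<lambda>q. monomial_eval a (rot q))"
      unfolding rot_monomials_def by blast
    let ?p = "\<lambda>b. if b = a then 1 else 0 :: complex"
    have supp: "{b. ?p b \<noteq> 0} = {a}" by auto
    have "?p \<in> homog_polys d" using a by (auto simp: homog_polys_def polys_def)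
    moreover have "f = cone_restriction ?p \<circ> rot"
      unfolding f comp_def cone_restriction_rot poly_eval_def supp by simp
    ultimately show "f \<in> fun_vs.span ((\<lambda>F. F \<circ> rot) ` coord_ring_part d)"
      by (intro fun_vs.span_base) (auto simp: coord_ring_part_eq)
  qed
qed

lemma hilbert_function_eq_dim_rot_monomials: "hilbert_function d = fun_vs.dim (rot_monomials d)"
proof -
  have "fun_vs.span (coord_ring_part d) = coord_ring_part d"
    by (simp add: subspace_coord_ring_part)
  then have "inj_on (\<lambda>F. F \<circ> rot) (fun_vs.span (coord_ring_part d))"
    using inj_on_pullback_coord_ring_part by (simp only:)
  then have "fun_vs.dim ((\<lambda>F. F \<circ> rot) ` coord_ring_part d) = hilbert_function d"
    unfolding hilbert_function_def by (rule fun_vs_pair.dim_image_eq_of_inj_on[OF linear_comp_right])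
  with span_pullback_coord_ring_part show ?thesis
    by (metis fun_vs.dim_span)
qed

section \<open>Quaternion monomials\<close>

definition qmonomial :: "nat list \<Rightarrow> quat \<Rightarrow> complex" where
  "qmonomial e = (\<lambda>(a, b, c, d). a ^ e!0 * b ^ e!1 * c ^ e!2 * d ^ e!3)"

definition exponents :: "nat \<Rightarrow> nat list set" where
  "exponents k = {e. length e = 4 \<and> sum_list e = k}"

definition qmonomials :: "nat \<Rightarrow> (quat \<Rightarrow> complex) set" where
  "qmonomials k = qmonomial ` exponents k"

lemma card_exponents: "card (exponents k) = (k + 3) choose 3"
proof -
  have "card (exponents k) = (k + 3) choose k"
    unfolding exponents_def by (subst card_length_sum_list) (simp add: add.commute)
  also have "\<dots> = (k + 3) choose 3"
    by (subst binomial_symmetric) simp_all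
  finally show ?thesis .
qed

lemma finite_exponents: "finite (exponents k)"
  by (rule card_ge_0_finite) (simp add: card_exponents)

lemma exponentsE:
  assumes "e \<in> exponents k"
  obtains x0 x1 x2 x3 where "e = [x0, x1, x2, x3]" "x0 + x1 + x2 + x3 = k"
proof -
  have len: "length e = 4" and sum: "sum_list e = k" using assms by (auto simp: exponents_def)
  have "e = [e!0, e!1, e!2, e!3]"
    using len by (intro nth_equalityI) (auto simp: less_Suc_eq numeral_eq_Suc)
  with sum that show ?thesis by (metis add.assoc add.right_neutral sum_list.Cons sum_list.Nil)
qed

text \<open>
  Kronecker substitution: on the curve \<open>(t, t\<^sup>B, t\<^bsup>B\<^sup>2\<^esup>, t\<^bsup>B\<^sup>3\<^esup>)\<close> the monomial with exponent
  list \<open>e\<close> becomes \<open>t ^ horner B e\<close>, and distinct exponent lists with entries below \<open>B\<close> give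
  distinct powers.
\<close>

definition horner :: "nat \<Rightarrow> nat list \<Rightarrow> nat" where
  "horner B e = foldr (\<lambda>x n. x + B * n) e 0"

lemma horner_inj:
  assumes "length e = length e'" "\<forall>x\<in>set e. x < B" "\<forall>x\<in>set e'. x < B" "horner B e = horner B e'"
  shows "e = e'"
  using assms
proof (induction e arbitrary: e')
  case Nil
  then show ?case by simp
next
  case (Cons x e)
  then obtain y e'' where e': "e' = y # e''" by (cases e') auto
  have "x + B * horner B e = y + B * horner B e''" "x < B" "y < B"
    using Cons.prems by (auto simp: e' horner_def)
  then have "x = y" "horner B e = horner B e''"
    by (metis add.commute mod_less mod_mult_self2,
        metis add.commute div_less div_mult_self2 add_0 less_nat_zero_code)
  with Cons show ?case by (simp add: e')
qed

lemma qmonomial_moment_curve: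
  assumes "e \<in> exponents k"
  shows "qmonomial e (t, t ^ B, t ^ (B * B), t ^ (B * B * B)) = t ^ horner B e"
proof -
  obtain x0 x1 x2 x3 where e: "e = [x0, x1, x2, x3]" using assms by (rule exponentsE)
  have "horner B e = x0 + B * x1 + B * B * x2 + B * B * B * x3"
    by (simp add: e horner_def algebra_simps)
  then show ?thesis
    by (simp add: e qmonomial_def power_mult[symmetric] power_add[symmetric])
qed

lemma inj_on_horner: "inj_on (horner (Suc k)) (exponents k)"
proof (rule inj_onI)
  fix e e' assume "e \<in> exponents k" "e' \<in> exponents k" "horner (Suc k) e = horner (Suc k) e'"
  moreover have "\<forall>x\<in>set e. x < Suc k" if "e \<in> exponents k" for e
    using that by (auto elim!: exponentsE)
  ultimately show "e = e'" by (intro horner_inj) (auto simp: exponents_def)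
qed

lemma coeff_zero_if_poly_vanishes:
  fixes c :: "'a \<Rightarrow> complex"
  assumes "finite S" "inj_on \<kappa> S" "\<And>t. (\<Sum>e\<in>S. c e * t ^ \<kappa> e) = 0" "e0 \<in> S"
  shows "c e0 = 0"
proof -
  define P where "P = (\<Sum>e\<in>S. monom (c e) (\<kappa> e))"
  have "poly P t = 0" for t
    unfolding P_def poly_sum poly_monom using assms(3) by simp
  then have "P = 0" using poly_all_0_iff_0 by blast
  then have "0 = coeff P (\<kappa> e0)" by simp
  also have "\<dots> = (\<Sum>e\<in>S. if e = e0 then c e else 0)"
    unfolding P_def coeff_sum coeff_monom using assms(2,4) by (intro sum.cong) (auto dest: inj_onD)
  also have "\<dots> = c e0" using assms(1,4) by simp
  finally show ?thesis by simp
qed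

lemma inj_on_qmonomial: "inj_on qmonomial (exponents k)"
proof (rule inj_onI)
  fix e e' assume e: "e \<in> exponents k" "e' \<in> exponents k" and eq: "qmonomial e = qmonomial e'"
  have "(2::complex) ^ horner (Suc k) e = 2 ^ horner (Suc k) e'"
    using qmonomial_moment_curve[OF e(1), of 2 "Suc k"] qmonomial_moment_curve[OF e(2), of 2 "Suc k"] eq
    by simp
  then have "of_nat (2 ^ horner (Suc k) e) = (of_nat (2 ^ horner (Suc k) e') :: complex)"
    by simp
  then have "horner (Suc k) e = horner (Suc k) e'"
    by (simp only: of_nat_eq_iff power_inject_exp')
  with inj_on_horner e show "e = e'" by (blast dest: inj_onD)
qed

lemma independent_qmonomials: "fun_vs.independent (qmonomials k)"
proof -
  have fin: "finite (qmonomials k)" unfolding qmonomials_def using finite_exponents by simp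
  have "u f = 0" if f: "f \<in> qmonomials k" and z: "(\<Sum>g\<in>qmonomials k. (\<lambda>x. u g * g x)) = 0" for u f
  proof -
    obtain e0 where e0: "e0 \<in> exponents k" "f = qmonomial e0" using f unfolding qmonomials_def by blast
    have "(\<Sum>e\<in>exponents k. u (qmonomial e) * t ^ horner (Suc k) e) = 0" for t
    proof -
      let ?p = "(t, t ^ Suc k, t ^ (Suc k * Suc k), t ^ (Suc k * Suc k * Suc k))"
      have "(\<Sum>e\<in>exponents k. u (qmonomial e) * t ^ horner (Suc k) e)
          = (\<Sum>e\<in>exponents k. u (qmonomial e) * qmonomial e ?p)"
        by (intro sum.cong refl) (simp only: qmonomial_moment_curve)
      also have "\<dots> = (\<Sum>g\<in>qmonomials k. (\<lambda>x. u g * g x)) ?p"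
        by (simp only: qmonomials_def sum_fun_apply sum.reindex[OF inj_on_qmonomial] comp_def)
      finally show ?thesis using z by simp
    qed
    from coeff_zero_if_poly_vanishes[OF finite_exponents inj_on_horner this e0(1)] show ?thesis
      using e0(2) by simp
  qed
  then show ?thesis unfolding fun_vs.dependent_finite[OF fin] by blast
qed

lemma dim_qmonomials: "fun_vs.dim (qmonomials k) = (k + 3) choose 3"
  using fun_vs.dim_eq_card_independent[OF independent_qmonomials] card_image[OF inj_on_qmonomial]
  by (simp add: qmonomials_def card_exponents)

lemma qmonomials_0: "qmonomials 0 = {1}"
proof -
  have "exponents 0 = {[0, 0, 0, 0]}"
  proof (intro set_eqI iffI)
    fix e assume "e \<in> exponents 0"
    then show "e \<in> {[0, 0, 0, 0]}" by (elim exponentsE) simp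
  qed (simp add: exponents_def)
  then show ?thesis by (auto simp: qmonomials_def qmonomial_def fun_eq_iff)
qed

lemma qmonomials_1:
  assumes "f \<in> qmonomials 1"
  obtains x where "x < 4" "f = (\<lambda>q. qcoord q x)"
proof -
  obtain x0 x1 x2 x3 where f: "f = qmonomial [x0, x1, x2, x3]" and "x0 + x1 + x2 + x3 = 1"
    using assms unfolding qmonomials_def by (auto elim: exponentsE)
  then consider "f = qmonomial [1, 0, 0, 0]" | "f = qmonomial [0, 1, 0, 0]"
    | "f = qmonomial [0, 0, 1, 0]" | "f = qmonomial [0, 0, 0, 1]"
    by (auto simp: add_is_1)
  then show ?thesis
    by cases (rule that[of 0] that[of 1] that[of 2] that[of 3]; simp add: qmonomial_def qcoord_def fun_eq_iff)+
qed

lemma exponents_add: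
  assumes "e \<in> exponents m" "e' \<in> exponents n"
  shows "map2 (+) e e' \<in> exponents (m + n)" "qmonomial (map2 (+) e e') = qmonomial e * qmonomial e'"
proof -
  obtain x0 x1 x2 x3 where "e = [x0, x1, x2, x3]" "x0 + x1 + x2 + x3 = m"
    using assms(1) by (rule exponentsE)
  moreover obtain y0 y1 y2 y3 where "e' = [y0, y1, y2, y3]" "y0 + y1 + y2 + y3 = n"
    using assms(2) by (rule exponentsE)
  ultimately show "map2 (+) e e' \<in> exponents (m + n)" "qmonomial (map2 (+) e e') = qmonomial e * qmonomial e'"
    by (simp_all add: exponents_def qmonomial_def power_add fun_eq_iff)
qed

lemma sum_list_split:
  assumes "sum_list e = m + (n :: nat)"
  obtains e1 e2 where "length e1 = length e" "length e2 = length e" "sum_list e1 = m" "sum_list e2 = n"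
    "e = map2 (+) e1 e2"
  using assms
proof (induction e arbitrary: m n thesis)
  case Nil
  then show ?case by fastforce
next
  case (Cons x e)
  define y where "y = min x m"
  have "y \<le> x" "y \<le> m" "x - y \<le> n" "sum_list e = (m - y) + (n - (x - y))"
    using Cons.prems(2) unfolding y_def by auto
  obtain e1 e2 where e12: "length e1 = length e" "length e2 = length e" "sum_list e1 = m - y"
    "sum_list e2 = n - (x - y)" and e: "e = map2 (+) e1 e2"
    using Cons.IH[OF _ \<open>sum_list e = (m - y) + (n - (x - y))\<close>] by blast
  show ?case
  proof (rule Cons.prems(1))
    show "x # e = map2 (+) (y # e1) ((x - y) # e2)" using e \<open>y \<le> x\<close> by simp
  qed (use e12 \<open>y \<le> m\<close> \<open>x - y \<le> n\<close> in simp_all)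
qed

lemma qmonomials_add_split:
  assumes "f \<in> qmonomials (m + n)"
  obtains g h where "g \<in> qmonomials m" "h \<in> qmonomials n" "f = g * h"
proof -
  obtain e where e: "e \<in> exponents (m + n)" "f = qmonomial e"
    using assms unfolding qmonomials_def by blast
  then have "length e = 4" "sum_list e = m + n" by (auto simp: exponents_def)
  obtain e1 e2 where len: "length e1 = length e" "length e2 = length e"
    and sum: "sum_list e1 = m" "sum_list e2 = n" and split: "e = map2 (+) e1 e2"
    using \<open>sum_list e = m + n\<close> by (rule sum_list_split)
  have e1: "e1 \<in> exponents m" and e2: "e2 \<in> exponents n"
    using len sum \<open>length e = 4\<close> by (simp_all add: exponents_def)
  have "f = qmonomial e1 * qmonomial e2"
    using e(2) split exponents_add(2)[OF e1 e2] by simp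
  then show ?thesis using that e1 e2 unfolding qmonomials_def by blast
qed

lemma span_qmonomials_mult:
  "f \<in> fun_vs.span (qmonomials m) \<Longrightarrow> g \<in> fun_vs.span (qmonomials n) \<Longrightarrow>
    f * g \<in> fun_vs.span (qmonomials (m + n))"
  by (rule span_mult)
    (auto simp: qmonomials_def exponents_add(2)[symmetric] intro!: fun_vs.span_base exponents_add(1))

section \<open>Spans of pulled-back monomials\<close>

definition unit_exponent :: "3 \<Rightarrow> 3 \<Rightarrow> expo" where
  "unit_exponent i j = (\<lambda>i' j'. if i' = i \<and> j' = j then 1 else 0)"

lemma monomial_eval_unit_exponent: "monomial_eval (unit_exponent i j) M = M $ i $ j"
proof -
  have "(\<Prod>j'\<in>UNIV. M $ i' $ j' ^ unit_exponent i j i' j') = (if i' = i then M $ i $ j else 1)" for i'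
    by (cases "i' = i") (simp_all add: unit_exponent_def if_distrib[of "\<lambda>n. x ^ n" for x] cong: if_cong)
  then show ?thesis unfolding monomial_eval_def by simp
qed

lemma total_degree_unit_exponent: "total_degree (unit_exponent i j) = 1"
proof -
  have "(\<Sum>j'\<in>UNIV. unit_exponent i j i' j') = (if i' = i then 1 else 0)" for i'
    by (cases "i' = i") (simp_all add: unit_exponent_def)
  then show ?thesis unfolding total_degree_def by simp
qed

lemma rot_entry_in_rot_monomials: "(\<lambda>q. rot q $ i $ j) \<in> rot_monomials 1"
  unfolding rot_monomials_def
  by (rule image_eqI[of _ _ "unit_exponent i j"])
    (simp_all add: monomial_eval_unit_exponent total_degree_unit_exponent)

lemma monomial_eval_add: "monomial_eval (\<lambda>i j. a i j + b i j) M = monomial_eval a M * monomial_eval b M"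
  by (simp add: monomial_eval_def power_add prod.distrib)

lemma total_degree_add: "total_degree (\<lambda>i j. a i j + b i j) = total_degree a + total_degree b"
  by (simp add: total_degree_def sum.distrib)

lemma rot_monomials_mult:
  assumes "f \<in> rot_monomials m" "g \<in> rot_monomials n"
  shows "f * g \<in> rot_monomials (m + n)"
proof -
  obtain a b where "total_degree a = m" "f = (\<lambda>q. monomial_eval a (rot q))"
    "total_degree b = n" "g = (\<lambda>q. monomial_eval b (rot q))"
    using assms unfolding rot_monomials_def by blast
  then show ?thesis
    unfolding rot_monomials_def
    by (intro image_eqI[of _ _ "\<lambda>i j. a i j + b i j"])
      (simp_all add: fun_eq_iff monomial_eval_add total_degree_add)
qed

lemma span_rot_monomials_mult:
  "f \<in> fun_vs.span (rot_monomials m) \<Longrightarrow> g \<in> fun_vs.span (rot_monomials n) \<Longrightarrow>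
    f * g \<in> fun_vs.span (rot_monomials (m + n))"
  by (rule span_mult) (auto intro: fun_vs.span_base rot_monomials_mult)

lemma rot_monomials_Suc:
  assumes "f \<in> rot_monomials (Suc k)"
  obtains i j g where "g \<in> rot_monomials k" "f = (\<lambda>q. rot q $ i $ j) * g"
proof -
  obtain a where a: "total_degree a = Suc k" "f = (\<lambda>q. monomial_eval a (rot q))"
    using assms unfolding rot_monomials_def by blast
  have "\<exists>i j. a i j \<noteq> 0"
  proof (rule ccontr)
    assume "\<not> ?thesis"
    then have "total_degree a = 0" by (simp add: total_degree_def)
    with a(1) show False by simp
  qed
  then obtain i j where "a i j \<noteq> 0" by blast
  define a' where "a' = (\<lambda>i' j'. a i' j' - unit_exponent i j i' j')"
  have a_eq: "a = (\<lambda>i' j'. unit_exponent i j i' j' + a' i' j')"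
    using \<open>a i j \<noteq> 0\<close> by (auto simp: a'_def unit_exponent_def fun_eq_iff)
  have "total_degree a = 1 + total_degree a'"
    by (subst a_eq) (simp add: total_degree_add total_degree_unit_exponent)
  then have "(\<lambda>q. monomial_eval a' (rot q)) \<in> rot_monomials k"
    using a(1) by (auto simp: rot_monomials_def)
  moreover have "f = (\<lambda>q. rot q $ i $ j) * (\<lambda>q. monomial_eval a' (rot q))"
    unfolding a(2) by (subst a_eq) (simp add: fun_eq_iff monomial_eval_add monomial_eval_unit_exponent)
  ultimately show ?thesis using that by blast
qed

lemma rot_monomials_0: "rot_monomials 0 = {1}"
proof -
  have "{a. total_degree a = 0} = {\<lambda>i j. 0}"
    by (auto simp: total_degree_def fun_eq_iff)
  then show ?thesis by (simp add: rot_monomials_def monomial_eval_def one_fun_def)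
qed

lemma qnorm_mult_span_rot_monomials:
  assumes "f \<in> fun_vs.span (rot_monomials (Suc k))"
  shows "qnorm * f \<in> fun_vs.span (rot_monomials (Suc (Suc k)))"
proof (rule span_mult[of "{qnorm}" "rot_monomials (Suc k)"])
  fix a b assume a: "a \<in> {qnorm}" and "b \<in> rot_monomials (Suc k)"
  then obtain i j g where g: "g \<in> rot_monomials k" and b: "b = (\<lambda>q. rot q $ i $ j) * g"
    by (elim rot_monomials_Suc)
  let ?r = "\<lambda>i j q. rot q $ i $ j"
  have "qnorm * ?r i j = ?r (i + 1) (j + 1) * ?r (i + 2) (j + 2) - ?r (i + 1) (j + 2) * ?r (i + 2) (j + 1)"
    by (simp add: fun_eq_iff qnorm_mult_rot)
  also have "\<dots> \<in> fun_vs.span (rot_monomials (1 + 1))"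
    by (intro fun_vs.span_diff fun_vs.span_base rot_monomials_mult rot_entry_in_rot_monomials)
  finally have "qnorm * ?r i j * g \<in> fun_vs.span (rot_monomials (1 + 1 + k))"
    using span_rot_monomials_mult fun_vs.span_base[OF g] by blast
  then show "a * b \<in> fun_vs.span (rot_monomials (Suc (Suc k)))"
    using a by (simp add: b mult.assoc)
qed (use assms in \<open>auto intro: fun_vs.span_base\<close>)

lemma qnorm_sq_in_span_rot_monomials: "qnorm * qnorm \<in> fun_vs.span (rot_monomials 2)"
proof -
  let ?r = "\<lambda>i j q. rot q $ i $ j"
  have "qnorm q ^ 2 = rot q $ 1 $ 1 * rot q $ 1 $ 1 + rot q $ 2 $ 1 * rot q $ 2 $ 1 + rot q $ 3 $ 1 * rot q $ 3 $ 1" for q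
    using arg_cong[OF rot_orthogonal[of q], of "\<lambda>M. M $ 1 $ 1"]
    by (simp add: matrix_matrix_mult_def transpose_def mat_def sum_3)
  then have "qnorm * qnorm = ?r 1 1 * ?r 1 1 + ?r 2 1 * ?r 2 1 + ?r 3 1 * ?r 3 1"
    by (simp add: fun_eq_iff power2_eq_square)
  also have "\<dots> \<in> fun_vs.span (rot_monomials (1 + 1))"
    by (intro fun_vs.span_add fun_vs.span_base rot_monomials_mult rot_entry_in_rot_monomials)
  finally show ?thesis by (simp only: one_add_one)
qed

lemma qgram_in_span:
  assumes "s \<in> fun_vs.span S" "\<And>i j. (\<lambda>q. M q $ i $ j) \<in> fun_vs.span S"
  shows "\<forall>x<4. \<forall>y<4. (\<lambda>q. qgram (s q) (M q) x y) \<in> fun_vs.span S"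
  unfolding all_less_4 qgram_def using assms
  by (simp add: numeral_eq_Suc span_add_fun span_diff_fun)

lemma qmonomials_2_subset: "qmonomials 2 \<subseteq> fun_vs.span (insert qnorm (rot_monomials 1))"
proof
  fix f assume "f \<in> qmonomials 2"
  then obtain g h where f: "f = g * h" and "g \<in> qmonomials 1" "h \<in> qmonomials 1"
    by (rule qmonomials_add_split[of f 1 1, unfolded one_add_one])
  then obtain x y where "x < 4" "g = (\<lambda>q. qcoord q x)" "y < 4" "h = (\<lambda>q. qcoord q y)"
    by (metis qmonomials_1)
  then have xy: "x < 4" "y < 4" "f = (\<lambda>q. qcoord q x * qcoord q y)"
    by (simp_all add: f fun_eq_iff)
  have "qnorm \<in> fun_vs.span (insert qnorm (rot_monomials 1))"
    by (intro fun_vs.span_base insertI1)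
  moreover have "(\<lambda>q. rot q $ i $ j) \<in> fun_vs.span (insert qnorm (rot_monomials 1))" for i j
    by (intro fun_vs.span_base insertI2 rot_entry_in_rot_monomials)
  ultimately have "(\<lambda>q. qgram (qnorm q) (rot q) x y) \<in> fun_vs.span (insert qnorm (rot_monomials 1))"
    using qgram_in_span xy by blast
  then have "(\<lambda>q. inverse 4 * qgram (qnorm q) (rot q) x y) \<in> fun_vs.span (insert qnorm (rot_monomials 1))"
    by (rule fun_vs.span_scale)
  moreover have "(\<lambda>q. inverse 4 * qgram (qnorm q) (rot q) x y) = f"
    using qgram_rot xy by (simp add: fun_eq_iff)
  ultimately show "f \<in> fun_vs.span (insert qnorm (rot_monomials 1))" by simp
qed

lemma span_insert_qnorm_mult_2:
  assumes "f \<in> fun_vs.span (insert qnorm (rot_monomials 1))"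
    and "g \<in> fun_vs.span (insert qnorm (rot_monomials 1))"
  shows "f * g \<in> fun_vs.span (rot_monomials 2)"
proof (rule span_mult[OF _ assms])
  have qnorm_r: "qnorm * r \<in> fun_vs.span (rot_monomials 2)" if "r \<in> rot_monomials 1" for r
    using qnorm_mult_span_rot_monomials[of r 0] that by (simp add: fun_vs.span_base numeral_2_eq_2)
  have r_r: "r * r' \<in> fun_vs.span (rot_monomials 2)" if "r \<in> rot_monomials 1" "r' \<in> rot_monomials 1" for r r'
    using rot_monomials_mult[OF that] by (simp add: fun_vs.span_base numeral_2_eq_2)
  have r_qnorm: "r * qnorm \<in> fun_vs.span (rot_monomials 2)" if "r \<in> rot_monomials 1" for r
    using qnorm_r[OF that] by (simp add: mult.commute)
  fix a b assume "a \<in> insert qnorm (rot_monomials 1)" "b \<in> insert qnorm (rot_monomials 1)"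
  then show "a * b \<in> fun_vs.span (rot_monomials 2)"
    using qnorm_sq_in_span_rot_monomials qnorm_r r_qnorm r_r by auto
qed

lemma span_insert_qnorm_mult_Suc:
  assumes "f \<in> fun_vs.span (insert qnorm (rot_monomials 1))"
    and "g \<in> fun_vs.span (rot_monomials (Suc k))"
  shows "f * g \<in> fun_vs.span (rot_monomials (Suc (Suc k)))"
proof (rule span_mult[OF _ assms])
  fix a b assume "a \<in> insert qnorm (rot_monomials 1)" "b \<in> rot_monomials (Suc k)"
  then show "a * b \<in> fun_vs.span (rot_monomials (Suc (Suc k)))"
    using qnorm_mult_span_rot_monomials[OF fun_vs.span_base] span_rot_monomials_mult[of a 1 b "Suc k"]
    by (auto intro: fun_vs.span_base)
qed

text \<open>
  The hypothesis \<open>d \<noteq> 1\<close> is essential: \<open>qnorm\<close> is a quadratic form in \<open>q\<close> but no linear combination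
  of the entries of \<open>rot\<close>.
\<close>

lemma qmonomials_subset_span_rot_monomials:
  assumes "d \<noteq> 1"
  shows "qmonomials (2 * d) \<subseteq> fun_vs.span (rot_monomials d)"
proof (cases "d = 0")
  case True
  then show ?thesis by (simp add: qmonomials_0 rot_monomials_0 fun_vs.span_base)
next
  case False
  with assms have "2 \<le> d" by simp
  then show ?thesis
  proof (induction d rule: nat_induct_at_least)
    case base
    show ?case
    proof
      fix f assume "f \<in> qmonomials (2 * 2)"
      then have "f \<in> qmonomials (2 + 2)" by simp
      then obtain g h where "g \<in> qmonomials 2" "h \<in> qmonomials 2" "f = g * h"
        by (rule qmonomials_add_split)
      then show "f \<in> fun_vs.span (rot_monomials 2)"
        using qmonomials_2_subset by (blast intro: span_insert_qnorm_mult_2)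
    qed
  next
    case (Suc d)
    show ?case
    proof
      fix f assume "f \<in> qmonomials (2 * Suc d)"
      then have "f \<in> qmonomials (2 + 2 * d)" by simp
      then obtain g h where "g \<in> qmonomials 2" "h \<in> qmonomials (2 * d)" "f = g * h"
        by (rule qmonomials_add_split)
      moreover obtain k where "d = Suc k" using Suc.hyps by (cases d) auto
      ultimately show "f \<in> fun_vs.span (rot_monomials (Suc d))"
        using qmonomials_2_subset Suc.IH by (blast intro: span_insert_qnorm_mult_Suc)
    qed
  qed
qed

lemma rot_entry_in_span_qmonomials: "(\<lambda>q. rot q $ i $ j) \<in> fun_vs.span (qmonomials 2)"
proof -
  have entries:
    "rot q $ 1 $ 1 = qmonomial [2,0,0,0] q + qmonomial [0,2,0,0] q - qmonomial [0,0,2,0] q - qmonomial [0,0,0,2] q"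
    "rot q $ 1 $ 2 = 2 * (qmonomial [0,1,1,0] q - qmonomial [1,0,0,1] q)"
    "rot q $ 1 $ 3 = 2 * (qmonomial [0,1,0,1] q + qmonomial [1,0,1,0] q)"
    "rot q $ 2 $ 1 = 2 * (qmonomial [0,1,1,0] q + qmonomial [1,0,0,1] q)"
    "rot q $ 2 $ 2 = qmonomial [2,0,0,0] q - qmonomial [0,2,0,0] q + qmonomial [0,0,2,0] q - qmonomial [0,0,0,2] q"
    "rot q $ 2 $ 3 = 2 * (qmonomial [0,0,1,1] q - qmonomial [1,1,0,0] q)"
    "rot q $ 3 $ 1 = 2 * (qmonomial [0,1,0,1] q - qmonomial [1,0,1,0] q)"
    "rot q $ 3 $ 2 = 2 * (qmonomial [0,0,1,1] q + qmonomial [1,1,0,0] q)"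
    "rot q $ 3 $ 3 = qmonomial [2,0,0,0] q - qmonomial [0,2,0,0] q - qmonomial [0,0,2,0] q + qmonomial [0,0,0,2] q"
    for q by (auto simp: rot_def qmonomial_def power2_eq_square algebra_simps split: prod.splits)
  have base: "qmonomial e \<in> fun_vs.span (qmonomials 2)" if "length e = 4" "sum_list e = 2" for e
    using that by (intro fun_vs.span_base) (simp add: qmonomials_def exponents_def)
  have "\<forall>i j. (\<lambda>q. rot q $ i $ j) \<in> fun_vs.span (qmonomials 2)"
    unfolding forall_3 entries
    by (intro conjI span_add_fun span_diff_fun fun_vs.span_scale base) simp_all
  then show ?thesis by blast
qed

lemma rot_monomials_subset_span_qmonomials: "rot_monomials d \<subseteq> fun_vs.span (qmonomials (2 * d))"
proof (induction d)
  case 0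
  then show ?case by (simp add: qmonomials_0 rot_monomials_0 fun_vs.span_base)
next
  case (Suc k)
  show ?case
  proof
    fix f assume "f \<in> rot_monomials (Suc k)"
    then obtain i j g where "g \<in> rot_monomials k" "f = (\<lambda>q. rot q $ i $ j) * g"
      by (rule rot_monomials_Suc)
    then show "f \<in> fun_vs.span (qmonomials (2 * Suc k))"
      using span_qmonomials_mult[OF rot_entry_in_span_qmonomials, of "g" "2 * k"] Suc.IH by auto
  qed
qed

section \<open>The Hilbert function and the Hilbert series\<close>

lemma dim_rot_monomials_ne_1:
  assumes "d \<noteq> 1"
  shows "fun_vs.dim (rot_monomials d) = (2 * d + 3) choose 3"
proof -
  have "fun_vs.span (rot_monomials d) = fun_vs.span (qmonomials (2 * d))"
    using rot_monomials_subset_span_qmonomials qmonomials_subset_span_rot_monomials[OF assms]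
    by (simp add: fun_vs.span_eq)
  then show ?thesis by (metis fun_vs.span_eq_dim dim_qmonomials)
qed

lemma dim_rot_monomials_1: "fun_vs.dim (rot_monomials 1) = 9"
proof -
  have sub: "rot_monomials 1 \<subseteq> (\<lambda>(i, j) q. rot q $ i $ j) ` UNIV"
  proof
    fix f assume "f \<in> rot_monomials 1"
    then have "f \<in> rot_monomials (Suc 0)" by simp
    then obtain i j g where "g \<in> rot_monomials 0" "f = (\<lambda>q. rot q $ i $ j) * g"
      by (rule rot_monomials_Suc)
    then have "f = (\<lambda>(i, j) q. rot q $ i $ j) (i, j)" by (simp add: rot_monomials_0)
    then show "f \<in> (\<lambda>(i, j) q. rot q $ i $ j) ` UNIV" by blast
  qed
  have fin: "finite (rot_monomials 1)" by (rule finite_subset[OF sub]) simp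
  have "card (rot_monomials 1) \<le> card ((\<lambda>(i, j) q. rot q $ i $ j) ` (UNIV :: (3 \<times> 3) set))"
    by (rule card_mono[OF _ sub]) simp
  also have "\<dots> \<le> 9" using card_image_le[of "UNIV :: (3 \<times> 3) set"] by simp
  finally have upper: "fun_vs.dim (rot_monomials 1) \<le> 9"
    using fun_vs.dim_le_card'[OF fin] by linarith
  obtain B where B: "B \<subseteq> rot_monomials 1" "rot_monomials 1 \<subseteq> fun_vs.span B"
    "card B = fun_vs.dim (rot_monomials 1)"
    by (rule fun_vs.basis_exists)
  have "qmonomials 2 \<subseteq> fun_vs.span (insert qnorm (rot_monomials 1))" by (rule qmonomials_2_subset)
  also have "\<dots> \<subseteq> fun_vs.span (insert qnorm B)"
    using B(2) by (intro fun_vs.span_minimal) (auto intro: fun_vs.span_base fun_vs.span_mono[THEN subsetD])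
  finally have "(2 + 3) choose 3 \<le> card (insert qnorm B)"
    using finite_subset[OF B(1) fin] fun_vs.dim_le_card dim_qmonomials by (metis finite.insertI)
  also have "\<dots> \<le> card B + 1"
    by (simp add: card_insert_le_m1 card_insert_if)
  finally show ?thesis using upper B(3) by (simp add: numeral_eq_Suc)
qed

lemma hilbert_function_eq: "hilbert_function d = (if d = 1 then 9 else (2 * d + 3) choose 3)"
  using dim_rot_monomials_1 dim_rot_monomials_ne_1 by (simp add: hilbert_function_eq_dim_rot_monomials)

lemma of_nat_choose_3: "(of_nat (n choose 3) :: 'a::field_char_0) = of_nat n * (of_nat n - 1) * (of_nat n - 2) / 6"
proof (cases "n < 3")
  case True
  then consider "n = 0" | "n = 1" | "n = 2" by linarith
  then show ?thesis by cases simp_all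
next
  case False
  then show ?thesis
    by (simp add: binomial_gbinomial gbinomial_pochhammer' pochhammer_rec' numeral_3_eq_3 fact_numeral
        of_nat_diff field_simps)
qed

lemma fps_odd_choose_3_times_one_minus_X_pow_4:
  "Abs_fps (\<lambda>d. of_nat ((2 * d + 3) choose 3)) * (1 - fps_X) ^ 4 = (1 + 6 * fps_X + fps_X ^ 2 :: rat fps)"
proof -
  define c :: "nat \<Rightarrow> rat" where "c d = of_nat ((2 * d + 3) choose 3)" for d
  have c: "c d = (2 * of_nat d + 3) * (2 * of_nat d + 2) * (2 * of_nat d + 1) / 6" for d
    unfolding c_def of_nat_choose_3 by (simp add: algebra_simps)
  have binomial: "(1 - fps_X) ^ 4 = (1 - 4 * fps_X + 6 * fps_X ^ 2 - 4 * fps_X ^ 3 + fps_X ^ 4 :: rat fps)"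
    by algebra
  have "Abs_fps c * (1 - fps_X) ^ 4 = Abs_fps c - fps_const 4 * (fps_X ^ 1 * Abs_fps c)
      + fps_const 6 * (fps_X ^ 2 * Abs_fps c) - fps_const 4 * (fps_X ^ 3 * Abs_fps c) + fps_X ^ 4 * Abs_fps c"
    unfolding binomial numeral_fps_const[symmetric] by algebra
  then have nth: "fps_nth (Abs_fps c * (1 - fps_X) ^ 4) n = c n - 4 * (if n < 1 then 0 else c (n - 1))
      + 6 * (if n < 2 then 0 else c (n - 2)) - 4 * (if n < 3 then 0 else c (n - 3)) + (if n < 4 then 0 else c (n - 4))"
    for n by (simp only: fps_add_nth fps_sub_nth fps_mult_left_const_nth fps_X_power_mult_nth fps_nth_Abs_fps)
  have "fps_nth (Abs_fps c * (1 - fps_X) ^ 4) n = fps_nth (1 + 6 * fps_X + fps_X ^ 2 :: rat fps) n" for n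
  proof (cases "n < 4")
    case True
    then consider "n = 0" | "n = 1" | "n = 2" | "n = 3" by linarith
    then show ?thesis by cases (subst nth; simp add: c numeral_fps_const)+
  next
    case False
    then obtain m where m: "n = m + 4" by (metis add.commute le_Suc_ex not_less)
    have "c (m + 4) - 4 * c (m + 3) + 6 * c (m + 2) - 4 * c (m + 1) + c m = 0"
      unfolding c by (simp add: field_simps)
    then show ?thesis by (subst nth) (simp add: m numeral_fps_const add.commute)
  qed
  then show ?thesis unfolding c_def[abs_def] by (rule fps_ext)
qed

lemma hilbert_series_eq: "hilbert_series = - fps_X + Abs_fps (\<lambda>d. of_nat ((2 * d + 3) choose 3))"
proof (rule fps_ext)
  fix n
  have "(5::nat) choose 3 = 10" by (simp add: numeral_eq_Suc)
  then show "fps_nth hilbert_series n = fps_nth (- fps_X + Abs_fps (\<lambda>d. of_nat ((2 * d + 3) choose 3))) n"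
    by (cases "n = 1") (simp_all add: hilbert_series_def hilbert_function_eq)
qed

theorem theorem3p2:
  shows "hilbert_series = - fps_X + Abs_fps (\<lambda>d. of_nat ((2*d+3) choose 3))
       \<and> hilbert_series = (1 + 5*fps_X + 5*fps_X^2 - 6*fps_X^3 + 4*fps_X^4 - fps_X^5) / (1 - fps_X)^4"
proof
  show series: "hilbert_series = - fps_X + Abs_fps (\<lambda>d. of_nat ((2*d+3) choose 3))"
    by (rule hilbert_series_eq)
  have "fps_nth ((1 - fps_X) ^ 4 :: rat fps) 0 = 1"
    by (simp add: fps_power_zeroth)
  then have nonzero: "(1 - fps_X) ^ 4 \<noteq> (0 :: rat fps)" by auto
  have "hilbert_series * (1 - fps_X) ^ 4 = 1 + 5*fps_X + 5*fps_X^2 - 6*fps_X^3 + 4*fps_X^4 - fps_X^5"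
    unfolding series distrib_right fps_odd_choose_3_times_one_minus_X_pow_4 by algebra
  with nonzero show "hilbert_series = (1 + 5*fps_X + 5*fps_X^2 - 6*fps_X^3 + 4*fps_X^4 - fps_X^5) / (1 - fps_X)^4"
    by (metis fps_divide_times_eq)
qed

end
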